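(* Let $G=(V,E)$ be a finite directed acyclic graph with source $S$, run the dissemination protocol below, and fix a slot $t\ge1$ such that the source transmits in slot $t+1$ (i.e. $t+1\le T_S$). Then with probability at least $1-C/q$, where $C$ depends only on $G$, $n$, the rates and $t$, the following implication holds: if $\tau_w\le t$ for every non-source node $w$ and the subspaces $\Pi_w(t)$, $w\in V$, are pairwise distinct, then for every non-source node $u$ and every parent $u_i$ of $u$, the node $u_i$ is the unique node $w\in V$ minimizing $\dim\Pi_w(t)$ among all $w\in V$ with $\Pi^{(u_i)}_u(t+1)\subseteq\Pi_w(t)$. Consequently, the topology of $G$ is uniquely determined by $\{\Pi_w(t)\}_{w\in V}$ together with $\{\Pi^{(u_i)}_u(t+1)\}_{(u_i,u)\in E}$.
   Context: Dissemination protocol: $q$ is a prime power; $G=(V,E)$ is a finite directed acyclic graph without multiple edges, with a source node $S$; each edge $e$ has an integer rate $r_e\ge1$. The source holds $\Pi_S=\mathbb{F}_q^n$ and we set $\Pi_S(s)=\mathbb{F}_q^n$ for all $s$. Time is slotted, $s=1,2,\dots$; vectors sent in slot $s$ are received before the end of slot $s$. In each slot $s\le T_S$ (for some fixed end time $T_S$) the source sends on each outgoing edge $e$ exactly $r_e$ vectors drawn uniformly at random from $\mathbb{F}_q^n$. Each non-source node $v$ has a waiting time $\tau_v$ (possibly random, where the event $\{\tau_v\le s\}$ is determined by what was sent in slots $1,\dots,s$); in each slot $s\ge\tau_v+1$, $v$ sends on each outgoing edge $e$ exactly $r_e$ vectors, each drawn uniformly at random from $\Pi_v(s-1)$. All random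 draws in a slot are mutually independent and independent of the past. $\Pi_v(s)$ is the span of all vectors received by $v$ in slots $1,\dots,s$ ($\Pi_v(0)=\{0\}$), and $\Pi^{(w)}_v(s)$ is the span of all vectors received by $v$ from its parent $w$ in slots $1,\dots,s$. A parent of $u$ is a node $w$ with $(w,u)\in E$. *)

theory Defs
  imports "HOL-Probability.Product_PMF" "HOL-Algebra.Ring" "HOL-Library.FuncSet"
begin

text \<open>Vectors of F_q^n: functions on {0..<n} with values in the carrier of the field
  (extensional). The field is an HOL-Algebra structure on a nat carrier, so that the
  constant C can be chosen before quantifying over all finite fields.\<close>

type_synonym vec = "nat \<Rightarrow> nat"
type_synonym 'v slot = "('v \<times> 'v) \<times> nat \<Rightarrow> vec option"
type_synonym 'v hist = "'v slot list"

definition fullspace :: "nat ring \<Rightarrow> nat \<Rightarrow> vec set" where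
  "fullspace R n = ({0..<n} \<rightarrow>\<^sub>E carrier R)"

definition lincomb :: "nat ring \<Rightarrow> nat \<Rightarrow> (vec \<Rightarrow> nat) \<Rightarrow> vec set \<Rightarrow> vec" where
  "lincomb R n c X = (\<lambda>i\<in>{0..<n}. finsum R (\<lambda>x. mult R (c x) (x i)) X)"

definition vspan :: "nat ring \<Rightarrow> nat \<Rightarrow> vec set \<Rightarrow> vec set" where
  "vspan R n A = {lincomb R n c X | c X. finite X \<and> X \<subseteq> A \<and> c \<in> X \<rightarrow> carrier R}"

definition vdim :: "nat ring \<Rightarrow> nat \<Rightarrow> vec set \<Rightarrow> nat" where
  "vdim R n W = (LEAST k. \<exists>B. finite B \<and> card B = k \<and> B \<subseteq> W \<and> vspan R n B = W)"

text \<open>Vectors received by v from parent w in slots 1..s (slot j is h ! (j-1)).\<close>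
definition received :: "('v \<times> 'v) set \<Rightarrow> ('v \<times> 'v \<Rightarrow> nat) \<Rightarrow> 'v hist \<Rightarrow> 'v \<Rightarrow> 'v \<Rightarrow> nat \<Rightarrow> vec set" where
  "received E r h w v s = {x. \<exists>j<s. \<exists>i<r (w,v). (w,v) \<in> E \<and> j < length h \<and> (h ! j) ((w,v),i) = Some x}"

definition Pi_from :: "nat ring \<Rightarrow> nat \<Rightarrow> ('v \<times> 'v) set \<Rightarrow> ('v \<times> 'v \<Rightarrow> nat) \<Rightarrow> 'v hist \<Rightarrow> 'v \<Rightarrow> 'v \<Rightarrow> nat \<Rightarrow> vec set" where
  "Pi_from R n E r h w v s = vspan R n (received E r h w v s)"

definition Pi_node :: "nat ring \<Rightarrow> nat \<Rightarrow> ('v \<times> 'v) set \<Rightarrow> ('v \<times> 'v \<Rightarrow> nat) \<Rightarrow> 'v \<Rightarrow> 'v hist \<Rightarrow> 'v \<Rightarrow> nat \<Rightarrow> vec set" where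
  "Pi_node R n E r S h v s =
     (if v = S then fullspace R n else vspan R n (\<Union>w. received E r h w v s))"

text \<open>Waiting times as stopping times: \<tau>_v is the least s with stop v s (slots 1..s),
  so the event {\<tau>_v \<le> s} depends only on what was sent in slots 1..s.\<close>
definition tau_le :: "('v \<Rightarrow> nat \<Rightarrow> 'v hist \<Rightarrow> bool) \<Rightarrow> 'v \<Rightarrow> nat \<Rightarrow> 'v hist \<Rightarrow> bool" where
  "tau_le stop v s h = (\<exists>j\<le>s. stop v j (take j h))"

definition transmits :: "'v \<Rightarrow> nat \<Rightarrow> ('v \<Rightarrow> nat \<Rightarrow> 'v hist \<Rightarrow> bool) \<Rightarrow> 'v \<Rightarrow> nat \<Rightarrow> 'v hist \<Rightarrow> bool" where
  "transmits S TS stop v s h = (if v = S then s \<le> TS else tau_le stop v (s - 1) h)"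

definition slot_pmf :: "nat ring \<Rightarrow> nat \<Rightarrow> ('v \<times> 'v) set \<Rightarrow> ('v \<times> 'v \<Rightarrow> nat) \<Rightarrow> 'v \<Rightarrow> nat
    \<Rightarrow> ('v \<Rightarrow> nat \<Rightarrow> 'v hist \<Rightarrow> bool) \<Rightarrow> 'v hist \<Rightarrow> 'v slot pmf" where
  "slot_pmf R n E r S TS stop h =
     Pi_pmf {(e,i). e \<in> E \<and> i < r e} None
       (\<lambda>((v,w),i). if transmits S TS stop v (Suc (length h)) h
                    then map_pmf Some (pmf_of_set (Pi_node R n E r S h v (length h)))
                    else return_pmf None)"

primrec proto :: "nat ring \<Rightarrow> nat \<Rightarrow> ('v \<times> 'v) set \<Rightarrow> ('v \<times> 'v \<Rightarrow> nat) \<Rightarrow> 'v \<Rightarrow> nat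
    \<Rightarrow> ('v \<Rightarrow> nat \<Rightarrow> 'v hist \<Rightarrow> bool) \<Rightarrow> nat \<Rightarrow> 'v hist pmf" where
  "proto R n E r S TS stop 0 = return_pmf []"
| "proto R n E r S TS stop (Suc s) =
     bind_pmf (proto R n E r S TS stop s)
       (\<lambda>h. map_pmf (\<lambda>x. h @ [x]) (slot_pmf R n E r S TS stop h))"

definition unique_min :: "nat ring \<Rightarrow> nat \<Rightarrow> 'v set \<Rightarrow> ('v \<times> 'v) set \<Rightarrow> ('v \<times> 'v \<Rightarrow> nat) \<Rightarrow> 'v
    \<Rightarrow> 'v hist \<Rightarrow> nat \<Rightarrow> vec set \<Rightarrow> 'v \<Rightarrow> bool" where
  "unique_min R n V E r S h t W w =
     (w \<in> V \<and> W \<subseteq> Pi_node R n E r S h w t \<and>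
      (\<forall>w'\<in>V. W \<subseteq> Pi_node R n E r S h w' t \<and> w' \<noteq> w \<longrightarrow>
          vdim R n (Pi_node R n E r S h w t) < vdim R n (Pi_node R n E r S h w' t)))"

definition good_event :: "nat ring \<Rightarrow> nat \<Rightarrow> 'v set \<Rightarrow> ('v \<times> 'v) set \<Rightarrow> ('v \<times> 'v \<Rightarrow> nat) \<Rightarrow> 'v
    \<Rightarrow> ('v \<Rightarrow> nat \<Rightarrow> 'v hist \<Rightarrow> bool) \<Rightarrow> nat \<Rightarrow> 'v hist \<Rightarrow> bool" where
  "good_event R n V E r S stop t h =
     ((\<forall>w\<in>V - {S}. tau_le stop w t h) \<and> inj_on (\<lambda>w. Pi_node R n E r S h w t) V \<longrightarrow>
        (\<forall>u\<in>V - {S}. \<forall>ui. (ui,u) \<in> E \<longrightarrow>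
            unique_min R n V E r S h t (Pi_from R n E r h ui u (Suc t)) ui)
      \<and> (\<forall>u\<in>V. {w. (w,u) \<in> E} =
            (\<lambda>W. THE w. unique_min R n V E r S h t W w) ` {Pi_from R n E r h ui u (Suc t) | ui. (ui,u) \<in> E}))"

end

theory Submission
  imports Defs
begin

(* Condition on the history h of the first t slots and look only at slot t+1.
   Call the new slot x "escaping" if, for every edge e = (a,b) and every node w with
   Pi_a(t) not contained in Pi_w(t), the first vector sent along e in slot t+1 lies outside
   Pi_w(t).  That vector is uniform on Pi_a(t), and a subspace U not contained in a subspace
   P meets P in at most |U|/q points (coset counting), so a union bound over pairs (e,w)
   shows that x fails to escape with probability at most |E||V|/q.  Conversely, if x escapes,
   all tau_w <= t and the Pi_w(t) are pairwise distinct, then for every edge (u_i,u) the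
   space Pi^(u_i)_u(t+1) lies in Pi_{u_i}(t), contains that first vector, and is therefore
   contained in Pi_w(t) only when Pi_{u_i}(t) is strictly contained in Pi_w(t), which forces
   dim Pi_{u_i}(t) < dim Pi_w(t).  This gives the good event with C = |E||V|. *)

definition vzero :: "nat ring \<Rightarrow> nat \<Rightarrow> vec" where
  "vzero R n = (\<lambda>i\<in>{0..<n}. \<zero>\<^bsub>R\<^esub>)"

definition vadd :: "nat ring \<Rightarrow> nat \<Rightarrow> vec \<Rightarrow> vec \<Rightarrow> vec" where
  "vadd R n x y = (\<lambda>i\<in>{0..<n}. x i \<oplus>\<^bsub>R\<^esub> y i)"

definition vsmul :: "nat ring \<Rightarrow> nat \<Rightarrow> nat \<Rightarrow> vec \<Rightarrow> vec" where
  "vsmul R n a x = (\<lambda>i\<in>{0..<n}. a \<otimes>\<^bsub>R\<^esub> x i)"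

definition subsp :: "nat ring \<Rightarrow> nat \<Rightarrow> vec set \<Rightarrow> bool" where
  "subsp R n W = (W \<subseteq> fullspace R n \<and> vzero R n \<in> W \<and> (\<forall>x\<in>W. \<forall>y\<in>W. vadd R n x y \<in> W)
     \<and> (\<forall>a\<in>carrier R. \<forall>x\<in>W. vsmul R n a x \<in> W))"

locale coord_space = field R for R :: "nat ring" (structure) + fixes n :: nat
  assumes finite_field: "finite (carrier R)"
begin

lemma fullspaceD: "x \<in> fullspace R n \<Longrightarrow> i < n \<Longrightarrow> x i \<in> carrier R"
  by (auto simp: fullspace_def)

lemma fullspace_eqI:
  "x \<in> fullspace R n \<Longrightarrow> y \<in> fullspace R n \<Longrightarrow> (\<And>i. i < n \<Longrightarrow> x i = y i) \<Longrightarrow> x = y"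
  unfolding fullspace_def by (rule PiE_ext) auto

lemma finite_fullspace: "finite (fullspace R n)"
  unfolding fullspace_def by (intro finite_PiE finite_field) auto

lemma vzero_in: "vzero R n \<in> fullspace R n"
  by (auto simp: vzero_def fullspace_def)

lemma vadd_in: "x \<in> fullspace R n \<Longrightarrow> y \<in> fullspace R n \<Longrightarrow> vadd R n x y \<in> fullspace R n"
  by (auto simp: vadd_def fullspace_def)

lemma vsmul_in: "a \<in> carrier R \<Longrightarrow> x \<in> fullspace R n \<Longrightarrow> vsmul R n a x \<in> fullspace R n"
  by (auto simp: vsmul_def fullspace_def)

lemma card_carrier_ge2: "2 \<le> card (carrier R)"
proof -
  have "card {\<zero>, \<one>} \<le> card (carrier R)"
    using finite_field by (intro card_mono) auto
  then show ?thesis by simp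
qed

lemma vadd_cancel:
  assumes "x \<in> fullspace R n" "u \<in> fullspace R n" "v \<in> fullspace R n"
    and "vadd R n x u = vadd R n x v"
  shows "u = v"
proof (rule fullspace_eqI[OF assms(2,3)])
  fix i assume i: "i < n"
  have c: "x i \<in> carrier R" "u i \<in> carrier R" "v i \<in> carrier R"
    using assms(1-3) i by (auto simp: fullspaceD)
  have "x i \<oplus> u i = x i \<oplus> v i"
    using fun_cong[OF assms(4), of i] i by (simp add: vadd_def)
  have "u i = (x i \<oplus> u i) \<ominus> x i" "v i = (x i \<oplus> v i) \<ominus> x i"
    using c by algebra+
  then show "u i = v i" using \<open>x i \<oplus> u i = x i \<oplus> v i\<close> by simp
qed

text \<open>If a x + u = b x + v with a \<noteq> b and u, v in a subspace W, then x is in W, since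
  x = (a - b)\<inverse> (v - u).  This is the basic exchange step of linear algebra.\<close>
lemma subsp_solve:
  assumes W: "subsp R n W" and x: "x \<in> fullspace R n" and uv: "u \<in> W" "v \<in> W"
    and ab: "a \<in> carrier R" "b \<in> carrier R" "a \<noteq> b"
    and eq: "vadd R n (vsmul R n a x) u = vadd R n (vsmul R n b x) v"
  shows "x \<in> W"
proof -
  define \<delta> where "\<delta> = a \<ominus> b"
  have "a = \<delta> \<oplus> b" using ab unfolding \<delta>_def by algebra
  then have \<delta>: "\<delta> \<in> carrier R" "\<delta> \<noteq> \<zero>"
    using ab unfolding \<delta>_def by auto
  then have inv\<delta>: "inv \<delta> \<in> carrier R" "inv \<delta> \<otimes> \<delta> = \<one>"
    using field_Units by auto
  have uvf: "u \<in> fullspace R n" "v \<in> fullspace R n" using W uv by (auto simp: subsp_def)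
  let ?y = "vsmul R n (inv \<delta>) (vadd R n v (vsmul R n (\<ominus> \<one>) u))"
  have "x = ?y"
  proof (rule fullspace_eqI[OF x])
    show "?y \<in> fullspace R n" using inv\<delta> uvf by (intro vsmul_in vadd_in) auto
  next
    fix i assume i: "i < n"
    have c: "x i \<in> carrier R" "u i \<in> carrier R" "v i \<in> carrier R"
      using x uvf i by (auto simp: fullspaceD)
    have ei: "a \<otimes> x i \<oplus> u i = b \<otimes> x i \<oplus> v i"
      using fun_cong[OF eq, of i] i by (simp add: vadd_def vsmul_def)
    have "\<delta> \<otimes> x i = (a \<otimes> x i \<oplus> u i) \<ominus> (b \<otimes> x i \<oplus> u i)"
      using c ab unfolding \<delta>_def by algebra
    also have "\<dots> = v i \<oplus> (\<ominus> \<one>) \<otimes> u i"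
      unfolding ei using c ab by algebra
    finally have "x i = inv \<delta> \<otimes> (v i \<oplus> (\<ominus> \<one>) \<otimes> u i)"
      using c \<delta> inv\<delta> by (metis m_assoc l_one)
    then show "x i = ?y i" using i by (simp add: vadd_def vsmul_def)
  qed
  then show ?thesis using W uv inv\<delta> by (auto simp: subsp_def)
qed

text \<open>Coset counting: if the subspace U is not contained in the subspace W, the cosets
  a v + (U \<inter> W), a \<in> F, for a fixed v \<in> U - W are disjoint subsets of U, so
  q |U \<inter> W| \<le> |U|.\<close>
lemma coset_card:
  assumes U: "subsp R n U" and W: "subsp R n W" and nsub: "\<not> U \<subseteq> W"
  shows "card (carrier R) * card (U \<inter> W) \<le> card U"
proof -
  obtain v where v: "v \<in> U" "v \<notin> W" using nsub by blast
  have vf: "v \<in> fullspace R n" using U v by (auto simp: subsp_def)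
  define f where "f = (\<lambda>(a, y). vadd R n (vsmul R n a v) y)"
  have img: "f ` (carrier R \<times> (U \<inter> W)) \<subseteq> U"
    using U v by (auto simp: f_def subsp_def)
  have "inj_on f (carrier R \<times> (U \<inter> W))"
  proof (rule inj_onI, clarify)
    fix a y b y' assume a: "a \<in> carrier R" and y: "y \<in> U" "y \<in> W" and b: "b \<in> carrier R"
      and y': "y' \<in> U" "y' \<in> W" and eq: "f (a, y) = f (b, y')"
    have "a = b" using subsp_solve[OF W vf y(2) y'(2) a b] eq v(2) by (auto simp: f_def)
    moreover have "y = y'"
      using vadd_cancel[of "vsmul R n a v" y y'] eq \<open>a = b\<close> U y y' vsmul_in[OF a vf]
      by (auto simp: f_def subsp_def)
    ultimately show "a = b \<and> y = y'" by simp
  qed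
  then have "card (carrier R \<times> (U \<inter> W)) \<le> card U"
    using img U finite_fullspace by (intro card_inj_on_le) (auto simp: subsp_def intro: finite_subset)
  then show ?thesis by (simp add: card_cartesian_product)
qed


lemma lincomb_in:
  assumes "c \<in> X \<rightarrow> carrier R" "X \<subseteq> fullspace R n"
  shows "lincomb R n c X \<in> fullspace R n"
  using assms by (auto simp: lincomb_def fullspace_def fullspaceD intro!: finsum_closed)

lemma lincomb_empty: "lincomb R n c {} = vzero R n"
  by (simp add: lincomb_def vzero_def)

lemma lincomb_insert:
  assumes "finite X" "x \<notin> X" "c \<in> insert x X \<rightarrow> carrier R" "insert x X \<subseteq> fullspace R n"
  shows "lincomb R n c (insert x X) = vadd R n (vsmul R n (c x) x) (lincomb R n c X)"
proof -
  have "(\<Oplus>y\<in>insert x X. c y \<otimes> y i) = c x \<otimes> x i \<oplus> (\<Oplus>y\<in>X. c y \<otimes> y i)" if "i < n" for i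
  proof -
    have "\<And>z. z \<in> insert x X \<Longrightarrow> z i \<in> carrier R" "\<And>z. z \<in> insert x X \<Longrightarrow> c z \<in> carrier R"
      using assms that by (auto simp: fullspaceD)
    then show ?thesis using assms by (intro finsum_insert) auto
  qed
  then show ?thesis by (auto simp: lincomb_def vadd_def vsmul_def)
qed

lemma lincomb_ext0:
  assumes "finite Z" "X \<subseteq> Z" "c \<in> X \<rightarrow> carrier R" "Z \<subseteq> fullspace R n"
  shows "lincomb R n (\<lambda>z. if z \<in> X then c z else \<zero>) Z = lincomb R n c X"
proof -
  have "(\<Oplus>z\<in>Z. (if z \<in> X then c z else \<zero>) \<otimes> z i) = (\<Oplus>z\<in>X. c z \<otimes> z i)" if "i < n" for i
  proof -
    have "\<And>z. z \<in> Z \<Longrightarrow> z i \<in> carrier R" "\<And>z. z \<in> X \<Longrightarrow> c z \<in> carrier R"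
      using assms that by (auto simp: fullspaceD)
    then show ?thesis using assms by (intro add.finprod_mono_neutral_cong_left[symmetric]) auto
  qed
  then show ?thesis by (auto simp: lincomb_def)
qed

lemma lincomb_cong:
  assumes "\<And>z. z \<in> X \<Longrightarrow> c z = d z" "d \<in> X \<rightarrow> carrier R" "X \<subseteq> fullspace R n"
  shows "lincomb R n c X = lincomb R n d X"
proof -
  have "(\<Oplus>z\<in>X. c z \<otimes> z i) = (\<Oplus>z\<in>X. d z \<otimes> z i)" if "i < n" for i
  proof -
    have "\<And>z. z \<in> X \<Longrightarrow> z i \<in> carrier R" using assms that by (auto simp: fullspaceD)
    then show ?thesis using assms by (intro finsum_cong') auto
  qed
  then show ?thesis unfolding lincomb_def by (intro restrict_ext) simp
qed

lemma lincomb_add: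
  assumes "finite X" "c \<in> X \<rightarrow> carrier R" "d \<in> X \<rightarrow> carrier R" "X \<subseteq> fullspace R n"
  shows "lincomb R n (\<lambda>z. c z \<oplus> d z) X = vadd R n (lincomb R n c X) (lincomb R n d X)"
proof -
  have "(\<Oplus>z\<in>X. (c z \<oplus> d z) \<otimes> z i) = (\<Oplus>z\<in>X. c z \<otimes> z i) \<oplus> (\<Oplus>z\<in>X. d z \<otimes> z i)"
    if "i < n" for i
  proof -
    have xi: "\<And>z. z \<in> X \<Longrightarrow> z i \<in> carrier R" using assms that by (auto simp: fullspaceD)
    have ci: "\<And>z. z \<in> X \<Longrightarrow> c z \<in> carrier R" "\<And>z. z \<in> X \<Longrightarrow> d z \<in> carrier R"
      using assms by auto
    have "(\<Oplus>z\<in>X. (c z \<oplus> d z) \<otimes> z i) = (\<Oplus>z\<in>X. c z \<otimes> z i \<oplus> d z \<otimes> z i)"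
      using xi ci by (intro finsum_cong') (auto simp: l_distr)
    also have "\<dots> = (\<Oplus>z\<in>X. c z \<otimes> z i) \<oplus> (\<Oplus>z\<in>X. d z \<otimes> z i)"
      using xi ci by (intro finsum_addf) auto
    finally show ?thesis .
  qed
  then show ?thesis by (auto simp: lincomb_def vadd_def)
qed

lemma lincomb_smul:
  assumes "finite X" "a \<in> carrier R" "c \<in> X \<rightarrow> carrier R" "X \<subseteq> fullspace R n"
  shows "lincomb R n (\<lambda>z. a \<otimes> c z) X = vsmul R n a (lincomb R n c X)"
proof -
  have "(\<Oplus>z\<in>X. (a \<otimes> c z) \<otimes> z i) = a \<otimes> (\<Oplus>z\<in>X. c z \<otimes> z i)" if "i < n" for i
  proof -
    have xi: "\<And>z. z \<in> X \<Longrightarrow> z i \<in> carrier R" using assms that by (auto simp: fullspaceD)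
    have ci: "\<And>z. z \<in> X \<Longrightarrow> c z \<in> carrier R" using assms by auto
    have "(\<Oplus>z\<in>X. (a \<otimes> c z) \<otimes> z i) = (\<Oplus>z\<in>X. a \<otimes> (c z \<otimes> z i))"
      using assms xi ci by (intro finsum_cong') (auto simp: m_assoc)
    also have "\<dots> = a \<otimes> (\<Oplus>z\<in>X. c z \<otimes> z i)"
      using assms xi ci by (intro finsum_rdistr[symmetric]) auto
    finally show ?thesis .
  qed
  then show ?thesis by (auto simp: lincomb_def vsmul_def)
qed

lemma lincomb_single: "x \<in> fullspace R n \<Longrightarrow> lincomb R n (\<lambda>_. \<one>) {x} = x"
  by (intro fullspace_eqI lincomb_in) (auto simp: lincomb_def fullspaceD)

lemma lincomb_in_vspan:
  "finite X \<Longrightarrow> X \<subseteq> A \<Longrightarrow> c \<in> X \<rightarrow> carrier R \<Longrightarrow> lincomb R n c X \<in> vspan R n A"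
  unfolding vspan_def by blast

lemma in_vspan: "x \<in> A \<Longrightarrow> x \<in> fullspace R n \<Longrightarrow> x \<in> vspan R n A"
  using lincomb_in_vspan[of "{x}" A "\<lambda>_. \<one>"] lincomb_single by simp

lemma vspan_mono: "A \<subseteq> B \<Longrightarrow> vspan R n A \<subseteq> vspan R n B"
  unfolding vspan_def by blast

lemma subsp_vspan:
  assumes "A \<subseteq> fullspace R n"
  shows "subsp R n (vspan R n A)"
  unfolding subsp_def
proof (intro conjI ballI)
  show "vspan R n A \<subseteq> fullspace R n"
    using assms by (auto simp: vspan_def intro!: lincomb_in)
  show "vzero R n \<in> vspan R n A"
    using lincomb_in_vspan[of "{}" A] by (simp add: lincomb_empty)
next
  fix x y assume "x \<in> vspan R n A" "y \<in> vspan R n A"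
  then obtain c X d Y where x: "x = lincomb R n c X" "finite X" "X \<subseteq> A" "c \<in> X \<rightarrow> carrier R"
     and y: "y = lincomb R n d Y" "finite Y" "Y \<subseteq> A" "d \<in> Y \<rightarrow> carrier R"
    unfolding vspan_def by blast
  let ?c = "\<lambda>z. if z \<in> X then c z else \<zero>" and ?d = "\<lambda>z. if z \<in> Y then d z else \<zero>"
  have "lincomb R n (\<lambda>z. ?c z \<oplus> ?d z) (X \<union> Y)
      = vadd R n (lincomb R n ?c (X \<union> Y)) (lincomb R n ?d (X \<union> Y))"
    using x y assms by (intro lincomb_add) auto
  also have "\<dots> = vadd R n x y"
    using x y assms by (subst lincomb_ext0, auto)+
  finally show "vadd R n x y \<in> vspan R n A"
    using x y lincomb_in_vspan[of "X \<union> Y" A "\<lambda>z. ?c z \<oplus> ?d z"] by (auto simp: Pi_iff)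
next
  fix a x assume a: "a \<in> carrier R" and "x \<in> vspan R n A"
  then obtain c X where x: "x = lincomb R n c X" "finite X" "X \<subseteq> A" "c \<in> X \<rightarrow> carrier R"
    unfolding vspan_def by blast
  then have "lincomb R n (\<lambda>z. a \<otimes> c z) X = vsmul R n a x"
    using assms a lincomb_smul by auto
  then show "vsmul R n a x \<in> vspan R n A"
    using x a lincomb_in_vspan[of X A "\<lambda>z. a \<otimes> c z"] by auto
qed

lemma subsp_lincomb:
  assumes "subsp R n W" "finite X" "X \<subseteq> W" "c \<in> X \<rightarrow> carrier R"
  shows "lincomb R n c X \<in> W"
  using assms(2-4)
proof (induction X rule: finite_induct)
  case empty
  then show ?case using assms(1) by (simp add: lincomb_empty subsp_def)
next
  case (insert x X)
  then have "insert x X \<subseteq> fullspace R n" using assms(1) by (auto simp: subsp_def)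
  then show ?case using insert assms(1) by (subst lincomb_insert) (auto simp: subsp_def)
qed

lemma vspan_sub: "subsp R n W \<Longrightarrow> A \<subseteq> W \<Longrightarrow> vspan R n A \<subseteq> W"
  unfolding vspan_def by (auto intro!: subsp_lincomb)

lemma vspan_subsp: "subsp R n W \<Longrightarrow> vspan R n W = W"
  using vspan_sub[of W W] in_vspan[of _ W] by (auto simp: subsp_def)

lemma subsp_fullspace: "subsp R n (fullspace R n)"
  by (auto simp: subsp_def vzero_in vadd_in vsmul_in)

lemma subsp_finite: "subsp R n W \<Longrightarrow> finite W"
  using finite_fullspace by (auto simp: subsp_def intro: finite_subset)

lemma subsp_nonempty: "subsp R n W \<Longrightarrow> W \<noteq> {}"
  by (auto simp: subsp_def)

lemma minimal_spanning_set:
  assumes W: "subsp R n W"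
  obtains B where "finite B" "card B = vdim R n W" "B \<subseteq> W" "vspan R n B = W"
    "\<And>B'. finite B' \<Longrightarrow> B' \<subseteq> W \<Longrightarrow> vspan R n B' = W \<Longrightarrow> card B \<le> card B'"
proof -
  let ?P = "\<lambda>k. \<exists>B. finite B \<and> card B = k \<and> B \<subseteq> W \<and> vspan R n B = W"
  have "?P (card W)" using W subsp_finite vspan_subsp by blast
  then have "?P (vdim R n W)" unfolding vdim_def by (rule LeastI)
  then obtain B where B: "finite B" "card B = vdim R n W" "B \<subseteq> W" "vspan R n B = W" by blast
  have "card B \<le> card B'" if "finite B'" "B' \<subseteq> W" "vspan R n B' = W" for B'
    using that B(2) unfolding vdim_def by (metis (mono_tags, lifting) Least_le)
  with B that show ?thesis by blast
qed

text \<open>A span of B has at most q^|B| elements: every element is a combination with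
  coefficients in B \<rightarrow> F.\<close>
lemma card_vspan_le:
  assumes "finite B" "B \<subseteq> fullspace R n"
  shows "card (vspan R n B) \<le> card (carrier R) ^ card B"
proof -
  have "vspan R n B \<subseteq> (\<lambda>c. lincomb R n c B) ` (B \<rightarrow>\<^sub>E carrier R)"
  proof
    fix x assume "x \<in> vspan R n B"
    then obtain c X where x: "x = lincomb R n c X" "finite X" "X \<subseteq> B" "c \<in> X \<rightarrow> carrier R"
      unfolding vspan_def by blast
    let ?c = "restrict (\<lambda>z. if z \<in> X then c z else \<zero>) B"
    have "lincomb R n ?c B = lincomb R n (\<lambda>z. if z \<in> X then c z else \<zero>) B"
      using x assms by (intro lincomb_cong) auto
    also have "\<dots> = x" using x assms by (simp add: lincomb_ext0)
    finally show "x \<in> (\<lambda>c. lincomb R n c B) ` (B \<rightarrow>\<^sub>E carrier R)"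
      using x by (intro image_eqI[of _ _ ?c]) (auto simp: Pi_iff)
  qed
  then have "card (vspan R n B) \<le> card (B \<rightarrow>\<^sub>E carrier R)"
    using assms finite_field by (intro surj_card_le) (auto intro: finite_PiE)
  then show ?thesis by (simp add: card_PiE assms(1))
qed

text \<open>A minimal spanning set is linearly independent: two different coefficient vectors
  with the same combination would express some b0 \<in> B through B - {b0}, and B - {b0}
  would still span.\<close>
lemma minimal_spanning_set_indep:
  assumes W: "subsp R n W" and B: "finite B" "B \<subseteq> W" "vspan R n B = W"
    and minB: "\<And>B'. finite B' \<Longrightarrow> B' \<subseteq> W \<Longrightarrow> vspan R n B' = W \<Longrightarrow> card B \<le> card B'"
  shows "inj_on (\<lambda>c. lincomb R n c B) (B \<rightarrow>\<^sub>E carrier R)"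
proof (rule inj_onI, rule ccontr)
  fix c d assume c: "c \<in> B \<rightarrow>\<^sub>E carrier R" and d: "d \<in> B \<rightarrow>\<^sub>E carrier R"
    and eq: "lincomb R n c B = lincomb R n d B" and ne: "c \<noteq> d"
  obtain b0 where b0: "b0 \<in> B" "c b0 \<noteq> d b0"
  proof -
    have "\<not> (\<forall>b\<in>B. c b = d b)" using ne PiE_ext[OF c d] by metis
    then show ?thesis using that by blast
  qed
  define B' where "B' = B - {b0}"
  have Bf: "B \<subseteq> fullspace R n" using W B by (auto simp: subsp_def)
  have ins: "B = insert b0 B'" "b0 \<notin> B'" "finite B'" using b0 B by (auto simp: B'_def)
  have B'f: "B' \<subseteq> fullspace R n" using Bf ins by auto
  have cd: "c \<in> insert b0 B' \<rightarrow> carrier R" "d \<in> insert b0 B' \<rightarrow> carrier R"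
    using c d ins(1) by (auto simp: PiE_iff)
  have "vadd R n (vsmul R n (c b0) b0) (lincomb R n c B')
      = vadd R n (vsmul R n (d b0) b0) (lincomb R n d B')"
    using eq lincomb_insert[OF ins(3,2) cd(1)] lincomb_insert[OF ins(3,2) cd(2)] Bf ins(1)
    by simp
  moreover have "lincomb R n c B' \<in> vspan R n B'" "lincomb R n d B' \<in> vspan R n B'"
    using cd ins(3) by (auto intro!: lincomb_in_vspan)
  moreover have "b0 \<in> fullspace R n" "c b0 \<in> carrier R" "d b0 \<in> carrier R"
    using Bf b0 cd by auto
  ultimately have "b0 \<in> vspan R n B'"
    using subsp_solve[OF subsp_vspan[OF B'f]] b0(2) by blast
  then have "B \<subseteq> vspan R n B'" using ins B'f in_vspan[of _ B'] by auto
  then have "W \<subseteq> vspan R n B'" using B(3) vspan_sub[OF subsp_vspan[OF B'f]] by blast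
  moreover have "vspan R n B' \<subseteq> W" using B(3) vspan_mono[of B' B] by (auto simp: B'_def)
  ultimately have "card B \<le> card B'"
    using B(2) ins(3) by (intro minB) (auto simp: B'_def)
  then show False using ins by simp
qed

lemma card_subsp:
  assumes W: "subsp R n W"
  shows "card W = card (carrier R) ^ vdim R n W"
proof -
  obtain B where B: "finite B" "card B = vdim R n W" "B \<subseteq> W" "vspan R n B = W"
     and minB: "\<And>B'. finite B' \<Longrightarrow> B' \<subseteq> W \<Longrightarrow> vspan R n B' = W \<Longrightarrow> card B \<le> card B'"
    using minimal_spanning_set[OF W] by blast
  have Bf: "B \<subseteq> fullspace R n" using W B by (auto simp: subsp_def)
  have "card W \<le> card (carrier R) ^ vdim R n W"
    using card_vspan_le[OF B(1) Bf] B by simp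
  moreover have "(\<lambda>c. lincomb R n c B) ` (B \<rightarrow>\<^sub>E carrier R) \<subseteq> W"
  proof
    fix x assume "x \<in> (\<lambda>c. lincomb R n c B) ` (B \<rightarrow>\<^sub>E carrier R)"
    then obtain c where "c \<in> B \<rightarrow> carrier R" "x = lincomb R n c B" by (auto simp: PiE_iff)
    then show "x \<in> W" using lincomb_in_vspan[OF B(1) subset_refl] B(4) by simp
  qed
  then have "card (B \<rightarrow>\<^sub>E carrier R) \<le> card W"
    using card_inj_on_le[OF minimal_spanning_set_indep[OF W B(1,3,4) minB]] subsp_finite[OF W]
    by blast
  then have "card (carrier R) ^ vdim R n W \<le> card W" by (simp add: card_PiE B(1,2))
  ultimately show ?thesis by (rule antisym)
qed

lemma vdim_strict_mono:
  assumes "subsp R n W1" "subsp R n W2" "W1 \<subset> W2"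
  shows "vdim R n W1 < vdim R n W2"
proof -
  have "card W1 < card W2" using assms subsp_finite by (intro psubset_card_mono) auto
  then have "card (carrier R) ^ vdim R n W1 < card (carrier R) ^ vdim R n W2"
    by (simp only: card_subsp[OF assms(1)] card_subsp[OF assms(2)])
  then show ?thesis using card_carrier_ge2 power_less_imp_less_exp by fastforce
qed

end

lemma received_app:
  "s \<le> length h \<Longrightarrow> received E r (h @ xs) w v s = received E r h w v s"
  unfolding received_def by (intro Collect_cong) (auto simp: nth_append)

lemma Pi_node_app:
  "s \<le> length h \<Longrightarrow> Pi_node R n E r S (h @ xs) v s = Pi_node R n E r S h v s"
  unfolding Pi_node_def by (simp add: received_app)

lemma tau_le_app: "s \<le> length h \<Longrightarrow> tau_le stop v s (h @ xs) = tau_le stop v s h"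
  unfolding tau_le_def by (intro ex_cong1) auto

lemma received_mono: "s \<le> s' \<Longrightarrow> received E r h w v s \<subseteq> received E r h w v s'"
  unfolding received_def by (rule Collect_mono) (meson less_le_trans)

definition consistent_hist :: "nat ring \<Rightarrow> nat \<Rightarrow> ('v \<times> 'v) set \<Rightarrow> ('v \<times> 'v \<Rightarrow> nat) \<Rightarrow> 'v
    \<Rightarrow> 'v hist \<Rightarrow> bool" where
  "consistent_hist R n E r S h = (\<forall>j<length h. \<forall>e i y. (h!j) (e,i) = Some y \<longrightarrow>
      y \<in> Pi_node R n E r S h (fst e) j \<and> y \<in> fullspace R n)"

lemma finite_slot_index:
  "finite E \<Longrightarrow> finite {(e, i). e \<in> E \<and> i < (r :: 'v \<times> 'v \<Rightarrow> nat) e}"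
proof -
  assume "finite E"
  moreover have "{(e, i). e \<in> E \<and> i < r e} = (SIGMA e:E. {..<r e})" by auto
  ultimately show ?thesis by simp
qed

lemma unique_min_the:
  assumes um: "unique_min R n V E r S h t W w"
  shows "(THE w'. unique_min R n V E r S h t W w') = w"
proof (rule the_equality[where P = "\<lambda>w'. unique_min R n V E r S h t W w'", OF um])
  fix w' assume um': "unique_min R n V E r S h t W w'"
  show "w' = w"
  proof (rule ccontr)
    assume "w' \<noteq> w"
    then have "vdim R n (Pi_node R n E r S h w t) < vdim R n (Pi_node R n E r S h w' t)"
      "vdim R n (Pi_node R n E r S h w' t) < vdim R n (Pi_node R n E r S h w t)"
      using um um' unfolding unique_min_def by blast+
    then show False by simp
  qed
qed

lemma parents_recovered:
  assumes "\<And>ui. (ui,u) \<in> E \<Longrightarrow> unique_min R n V E r S h t (W ui) ui"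
  shows "{w. (w,u) \<in> E} = (\<lambda>X. THE w. unique_min R n V E r S h t X w) ` {W ui | ui. (ui,u) \<in> E}"
proof -
  have "{W ui | ui. (ui,u) \<in> E} = W ` {w. (w,u) \<in> E}" by blast
  then have "(\<lambda>X. THE w. unique_min R n V E r S h t X w) ` {W ui | ui. (ui,u) \<in> E}
      = (\<lambda>ui. THE w. unique_min R n V E r S h t (W ui) w) ` {w. (w,u) \<in> E}"
    by (simp add: image_image)
  also have "\<dots> = (\<lambda>ui. ui) ` {w. (w,u) \<in> E}"
    by (intro image_cong refl unique_min_the assms) simp
  finally show ?thesis by simp
qed

definition escapes :: "nat ring \<Rightarrow> nat \<Rightarrow> 'v set \<Rightarrow> ('v \<times> 'v) set \<Rightarrow> ('v \<times> 'v \<Rightarrow> nat) \<Rightarrow> 'v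
    \<Rightarrow> 'v hist \<Rightarrow> nat \<Rightarrow> 'v slot \<Rightarrow> bool" where
  "escapes R n V E r S h t x =
     (\<forall>e\<in>E. \<forall>w\<in>V. \<not> Pi_node R n E r S h (fst e) t \<subseteq> Pi_node R n E r S h w t \<longrightarrow>
        (\<forall>y. x (e,0) = Some y \<longrightarrow> y \<notin> Pi_node R n E r S h w t))"

lemma bind_pmf_prob_le:
  fixes c :: real
  assumes "c \<ge> 0" "\<And>x. x \<in> set_pmf M \<Longrightarrow> measure_pmf.prob (f x) A \<le> c"
  shows "measure_pmf.prob (bind_pmf M f) A \<le> c"
proof -
  have "ennreal (measure_pmf.prob (bind_pmf M f) A) = emeasure (measure_pmf (bind_pmf M f)) A"
    by (simp add: measure_pmf.emeasure_eq_measure)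
  also have "\<dots> = (\<integral>\<^sup>+x. emeasure (measure_pmf (f x)) A \<partial>measure_pmf M)" by simp
  also have "\<dots> \<le> (\<integral>\<^sup>+x. ennreal c \<partial>measure_pmf M)"
    using assms(2) by (intro nn_integral_mono_AE)
      (auto intro!: AE_pmfI ennreal_leI simp: measure_pmf.emeasure_eq_measure)
  also have "\<dots> = ennreal c" by (simp add: measure_pmf.emeasure_space_1)
  finally show ?thesis using assms(1) by simp
qed

context coord_space
begin

lemma Pi_node_mono:
  assumes "s \<le> s'"
  shows "Pi_node R n E r S h v s \<subseteq> Pi_node R n E r S h v s'"
proof -
  have "(\<Union>w. received E r h w v s) \<subseteq> (\<Union>w. received E r h w v s')"
    using received_mono[OF assms] by (rule UN_mono[OF subset_refl])
  then show ?thesis unfolding Pi_node_def using vspan_mono by simp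
qed

lemma received_fullspace:
  assumes "consistent_hist R n E r S h"
  shows "received E r h w v s \<subseteq> fullspace R n"
proof
  fix y assume "y \<in> received E r h w v s"
  then obtain j i where "j < length h" "(h!j) ((w,v),i) = Some y" unfolding received_def by blast
  then show "y \<in> fullspace R n" using assms unfolding consistent_hist_def by blast
qed

lemma Pi_node_subsp:
  assumes "consistent_hist R n E r S h"
  shows "subsp R n (Pi_node R n E r S h v s)"
proof -
  have "(\<Union>w. received E r h w v s) \<subseteq> fullspace R n"
    using received_fullspace[OF assms] by blast
  then show ?thesis by (simp add: Pi_node_def subsp_fullspace subsp_vspan)
qed

lemma received_sub_Pi_node:
  assumes "consistent_hist R n E r S h"
  shows "received E r h w v (Suc s) \<subseteq> Pi_node R n E r S h w s"
proof
  fix y assume "y \<in> received E r h w v (Suc s)"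
  then obtain j i where j: "j < Suc s" "j < length h" "(h!j) ((w,v),i) = Some y"
    unfolding received_def by blast
  then have "y \<in> Pi_node R n E r S h (fst (w,v)) j"
    using assms unfolding consistent_hist_def by blast
  moreover have "j \<le> s" using j(1) by simp
  ultimately show "y \<in> Pi_node R n E r S h w s" using Pi_node_mono[of j s E r S h w] by auto
qed

lemma slot_support:
  assumes fE: "finite E" and x: "x \<in> set_pmf (slot_pmf R n E r S TS stop h)"
    and hi: "consistent_hist R n E r S h"
  shows slot_sent: "x ((v,w),i) = Some y \<Longrightarrow>
      (v,w) \<in> E \<and> i < r (v,w) \<and> y \<in> Pi_node R n E r S h v (length h)"
    and slot_transmits: "(v,w) \<in> E \<Longrightarrow> i < r (v,w) \<Longrightarrow>
      transmits S TS stop v (Suc (length h)) h \<Longrightarrow> \<exists>y. x ((v,w),i) = Some y"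
proof -
  let ?F = "\<lambda>((v,w),i). if transmits S TS stop v (Suc (length h)) h
                    then map_pmf Some (pmf_of_set (Pi_node R n E r S h v (length h)))
                    else return_pmf None"
  have xs: "x \<in> PiE_dflt {(e, i). e \<in> E \<and> i < r e} None (set_pmf \<circ> ?F)"
    using x set_Pi_pmf[OF finite_slot_index[OF fE, of r], where dflt=None and p="?F"]
    by (simp add: slot_pmf_def)
  have P: "finite (Pi_node R n E r S h v (length h))" "Pi_node R n E r S h v (length h) \<noteq> {}"
    using subsp_finite[OF Pi_node_subsp[OF hi]] subsp_nonempty[OF Pi_node_subsp[OF hi]] .
  have k: "x ((v,w),i) \<in> set_pmf (?F ((v,w),i))" if "(v,w) \<in> E" "i < r (v,w)"
    using xs that by (auto simp: PiE_dflt_def)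
  have kn: "x ((v,w),i) = None" if "\<not> ((v,w) \<in> E \<and> i < r (v,w))"
    using xs that by (auto simp: PiE_dflt_def)
  show "x ((v,w),i) = Some y \<Longrightarrow>
      (v,w) \<in> E \<and> i < r (v,w) \<and> y \<in> Pi_node R n E r S h v (length h)"
  proof -
    assume sent: "x ((v,w),i) = Some y"
    then have "(v,w) \<in> E \<and> i < r (v,w)" using kn by fastforce
    then show ?thesis using k sent P by (auto split: if_splits)
  qed
  show "(v,w) \<in> E \<Longrightarrow> i < r (v,w) \<Longrightarrow> transmits S TS stop v (Suc (length h)) h \<Longrightarrow>
      \<exists>y. x ((v,w),i) = Some y"
    using k P by auto
qed

lemma consistent_snoc:
  assumes fE: "finite E" and hi: "consistent_hist R n E r S h"
    and x: "x \<in> set_pmf (slot_pmf R n E r S TS stop h)"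
  shows "consistent_hist R n E r S (h @ [x])"
  unfolding consistent_hist_def
proof (intro allI impI)
  fix j e i y assume j: "j < length (h @ [x])" and hy: "((h @ [x]) ! j) (e, i) = Some y"
  obtain v w where e: "e = (v,w)" by (cases e)
  have "y \<in> Pi_node R n E r S h v j \<and> y \<in> fullspace R n"
  proof (cases "j < length h")
    case True
    then show ?thesis using hy hi e unfolding consistent_hist_def by (fastforce simp: nth_append)
  next
    case False
    then have jh: "j = length h" using j by simp
    then have "x ((v,w), i) = Some y" using hy e by simp
    then have "y \<in> Pi_node R n E r S h v (length h)" using slot_sent[OF fE x hi] by blast
    moreover have "Pi_node R n E r S h v (length h) \<subseteq> fullspace R n"
      using Pi_node_subsp[OF hi] by (simp add: subsp_def)
    ultimately show ?thesis using jh by auto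
  qed
  then show "y \<in> Pi_node R n E r S (h @ [x]) (fst e) j \<and> y \<in> fullspace R n"
    using j e Pi_node_app[of j h] by auto
qed

lemma proto_support:
  assumes fE: "finite E"
  shows "h \<in> set_pmf (proto R n E r S TS stop s) \<Longrightarrow> length h = s \<and> consistent_hist R n E r S h"
proof (induction s arbitrary: h)
  case 0
  then show ?case by (simp add: consistent_hist_def)
next
  case (Suc s)
  then obtain h0 x where "h0 \<in> set_pmf (proto R n E r S TS stop s)"
    and "x \<in> set_pmf (slot_pmf R n E r S TS stop h0)" and "h = h0 @ [x]"
    by auto
  then show ?case using Suc.IH consistent_snoc[OF fE] by auto
qed

lemma edge_unique_min:
  assumes fE: "finite E" and EV: "E \<subseteq> V \<times> V" and rate: "\<forall>e\<in>E. 1 \<le> r e" and TS: "Suc t \<le> TS"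
    and hl: "length h = t" and hi: "consistent_hist R n E r S h"
    and x: "x \<in> set_pmf (slot_pmf R n E r S TS stop h)" and esc: "escapes R n V E r S h t x"
    and tau: "\<forall>w\<in>V - {S}. tau_le stop w t h"
    and inj: "inj_on (\<lambda>w. Pi_node R n E r S h w t) V"
    and e: "(ui,u) \<in> E"
  shows "unique_min R n V E r S (h @ [x]) t (Pi_from R n E r (h @ [x]) ui u (Suc t)) ui"
proof -
  define PN where "PN w = Pi_node R n E r S h w t" for w
  let ?W = "Pi_from R n E r (h @ [x]) ui u (Suc t)"
  have PN_snoc: "Pi_node R n E r S (h @ [x]) w t = PN w" for w
    unfolding PN_def using Pi_node_app[of t h] hl by simp
  have sub: "subsp R n (PN w)" for w unfolding PN_def by (rule Pi_node_subsp[OF hi])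
  have hi': "consistent_hist R n E r S (h @ [x])" by (rule consistent_snoc[OF fE hi x])
  have uiV: "ui \<in> V" using e EV by auto
  have Wsub: "?W \<subseteq> PN ui"
    unfolding Pi_from_def using received_sub_Pi_node[OF hi', of ui u t] PN_snoc
    by (intro vspan_sub[OF sub]) simp
  txt \<open>u_i transmits in slot t + 1, so its first vector on the edge is part of ?W.\<close>
  have "transmits S TS stop ui (Suc (length h)) h"
    using tau uiV TS hl by (auto simp: transmits_def)
  moreover have r0: "0 < r (ui,u)" using rate e by fastforce
  ultimately obtain y0 where y0: "x ((ui,u),0) = Some y0"
    using slot_transmits[OF fE x hi e] by blast
  have "y0 \<in> received E r (h @ [x]) ui u (Suc t)"
    unfolding received_def using y0 e r0 hl nth_append_length[of h x]
    by (intro CollectI exI[of _ t]) auto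
  then have y0W: "y0 \<in> ?W"
    unfolding Pi_from_def using received_fullspace[OF hi'] by (blast intro: in_vspan)
  show ?thesis unfolding unique_min_def PN_snoc
  proof (intro conjI ballI impI uiV Wsub)
    fix w' assume w'V: "w' \<in> V" and w': "?W \<subseteq> PN w' \<and> w' \<noteq> ui"
    show "vdim R n (PN ui) < vdim R n (PN w')"
    proof (cases "PN ui \<subseteq> PN w'")
      case True
      have "PN ui \<noteq> PN w'" using inj w' w'V uiV unfolding PN_def by (metis inj_onD)
      then show ?thesis using True sub vdim_strict_mono by blast
    next
      case False
      then have "y0 \<notin> PN w'" using esc e w'V y0 unfolding escapes_def PN_def by fastforce
      then show ?thesis using y0W w' by blast
    qed
  qed
qed

lemma escapes_good_event:
  assumes fE: "finite E" and EV: "E \<subseteq> V \<times> V" and rate: "\<forall>e\<in>E. 1 \<le> r e" and TS: "Suc t \<le> TS"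
    and hl: "length h = t" and hi: "consistent_hist R n E r S h"
    and x: "x \<in> set_pmf (slot_pmf R n E r S TS stop h)" and esc: "escapes R n V E r S h t x"
  shows "good_event R n V E r S stop t (h @ [x])"
proof -
  have tau_snoc: "tau_le stop w t (h @ [x]) = tau_le stop w t h" for w
    using tau_le_app[of t h] hl by simp
  have PN_snoc: "(\<lambda>w. Pi_node R n E r S (h @ [x]) w t) = (\<lambda>w. Pi_node R n E r S h w t)"
    using Pi_node_app[of t h] hl by simp
  have "(\<forall>u\<in>V - {S}. \<forall>ui. (ui,u) \<in> E \<longrightarrow>
            unique_min R n V E r S (h @ [x]) t (Pi_from R n E r (h @ [x]) ui u (Suc t)) ui)
      \<and> (\<forall>u\<in>V. {w. (w,u) \<in> E} = (\<lambda>W. THE w. unique_min R n V E r S (h @ [x]) t W w) `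
            {Pi_from R n E r (h @ [x]) ui u (Suc t) | ui. (ui,u) \<in> E})"
    if tau: "\<forall>w\<in>V - {S}. tau_le stop w t h" and inj: "inj_on (\<lambda>w. Pi_node R n E r S h w t) V"
  proof -
    have um: "unique_min R n V E r S (h @ [x]) t (Pi_from R n E r (h @ [x]) ui u (Suc t)) ui"
      if "(ui,u) \<in> E" for ui u
      using edge_unique_min[OF assms tau inj that] .
    show ?thesis
    proof (intro conjI ballI allI impI)
      fix u ui assume "u \<in> V - {S}" "(ui,u) \<in> E"
      then show "unique_min R n V E r S (h @ [x]) t (Pi_from R n E r (h @ [x]) ui u (Suc t)) ui"
        by (intro um)
    next
      fix u assume "u \<in> V"
      show "{w. (w,u) \<in> E} = (\<lambda>W. THE w. unique_min R n V E r S (h @ [x]) t W w) `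
            {Pi_from R n E r (h @ [x]) ui u (Suc t) | ui. (ui,u) \<in> E}"
        by (rule parents_recovered[where W = "\<lambda>ui. Pi_from R n E r (h @ [x]) ui u (Suc t)"])
          (rule um)
    qed
  qed
  then show ?thesis unfolding good_event_def tau_snoc PN_snoc by blast
qed

lemma prob_first_vector_in:
  assumes fE: "finite E" and e: "e \<in> E" "1 \<le> r e" and hi: "consistent_hist R n E r S h"
    and hl: "length h = t" and ns: "\<not> Pi_node R n E r S h (fst e) t \<subseteq> Pi_node R n E r S h w t"
  shows "measure_pmf.prob (slot_pmf R n E r S TS stop h)
           {x. \<exists>y. x (e,0) = Some y \<and> y \<in> Pi_node R n E r S h w t} \<le> 1 / real (card (carrier R))"
proof -
  obtain a b where ab: "e = (a,b)" by (cases e)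
  let ?F = "\<lambda>((v,w),i). if transmits S TS stop v (Suc (length h)) h
                    then map_pmf Some (pmf_of_set (Pi_node R n E r S h v (length h)))
                    else return_pmf None"
  let ?U = "Pi_node R n E r S h a t" and ?P = "Pi_node R n E r S h w t"
  let ?A = "{z. \<exists>y. z = Some y \<and> y \<in> ?P}"
  have k: "((a,b),0) \<in> {(e, i). e \<in> E \<and> i < r e}" using e ab by auto
  have "measure_pmf.prob (slot_pmf R n E r S TS stop h) {x. \<exists>y. x (e,0) = Some y \<and> y \<in> ?P}
      = measure_pmf.prob (map_pmf (\<lambda>f. f ((a,b),0)) (slot_pmf R n E r S TS stop h)) ?A"
    by (simp add: ab vimage_def)
  also have "map_pmf (\<lambda>f. f ((a,b),0)) (slot_pmf R n E r S TS stop h) = ?F ((a,b),0)"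
    unfolding slot_pmf_def
    using Pi_pmf_component[OF finite_slot_index[OF fE, of r], of "((a,b),0)" None ?F] k by simp
  finally have eq: "measure_pmf.prob (slot_pmf R n E r S TS stop h)
      {x. \<exists>y. x (e,0) = Some y \<and> y \<in> ?P} = measure_pmf.prob (?F ((a,b),0)) ?A" .
  have qpos: "0 < real (card (carrier R))" using card_carrier_ge2 by simp
  show ?thesis
  proof (cases "transmits S TS stop a (Suc (length h)) h")
    case False
    then show ?thesis using eq qpos by simp
  next
    case True
    have subU: "subsp R n ?U" "subsp R n ?P" using Pi_node_subsp[OF hi] by blast+
    have Uf: "finite ?U" "0 < card ?U"
      using subsp_finite[OF subU(1)] subsp_nonempty[OF subU(1)] by (auto simp: card_gt_0_iff)
    have "measure_pmf.prob (?F ((a,b),0)) ?A = measure_pmf.prob (pmf_of_set ?U) ?P"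
      using True hl by (simp add: vimage_def)
    also have "\<dots> = real (card (?U \<inter> ?P)) / real (card ?U)"
      using Uf subsp_nonempty[OF subU(1)] by (simp add: measure_pmf_of_set)
    also have "\<dots> \<le> 1 / real (card (carrier R))"
    proof -
      have "card (carrier R) * card (?U \<inter> ?P) \<le> card ?U"
        using coset_card[OF subU] ns ab by simp
      then have "real (card (carrier R)) * real (card (?U \<inter> ?P)) \<le> real (card ?U)"
        by (metis of_nat_le_iff of_nat_mult)
      then show ?thesis using Uf qpos by (simp add: field_simps)
    qed
    finally show ?thesis using eq by simp
  qed
qed

text \<open>Union bound over the pairs (e, w): slot t + 1 fails to escape with probability
  at most |E| |V| / q.\<close>
lemma prob_not_escapes:
  fixes E :: "('v \<times> 'v) set"
  assumes V: "finite V" "E \<subseteq> V \<times> V" "\<forall>e\<in>E. 1 \<le> r e"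
    and hi: "consistent_hist R n E r S h" and hl: "length h = t"
  shows "measure_pmf.prob (slot_pmf R n E r S TS stop h) {x. \<not> escapes R n V E r S h t x}
     \<le> real (card E * card V) / real (card (carrier R))"
proof -
  have fE: "finite E" using V(1,2) finite_subset by blast
  let ?M = "slot_pmf R n E r S TS stop h" and ?q = "real (card (carrier R))"
  define BP where "BP = {p \<in> E \<times> V.
      \<not> Pi_node R n E r S h (fst (fst p)) t \<subseteq> Pi_node R n E r S h (snd p) t}"
  define Ev where "Ev p = {x :: 'v slot. \<exists>y. x (fst p, 0) = Some y \<and> y \<in> Pi_node R n E r S h (snd p) t}"
    for p :: "('v \<times> 'v) \<times> 'v"
  have fBP: "finite BP" "BP \<subseteq> E \<times> V" using fE V(1) by (auto simp: BP_def)
  have "{x. \<not> escapes R n V E r S h t x} \<subseteq> (\<Union>p\<in>BP. Ev p)"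
    unfolding escapes_def BP_def Ev_def by force
  then have "measure_pmf.prob ?M {x. \<not> escapes R n V E r S h t x} \<le> measure_pmf.prob ?M (\<Union>p\<in>BP. Ev p)"
    by (rule measure_pmf.finite_measure_mono) simp
  also have "\<dots> \<le> (\<Sum>p\<in>BP. measure_pmf.prob ?M (Ev p))"
    by (rule measure_pmf.finite_measure_subadditive_finite) (use fBP in auto)
  also have "\<dots> \<le> (\<Sum>p\<in>BP. 1 / ?q)"
  proof (rule sum_mono)
    fix p assume "p \<in> BP"
    then have "fst p \<in> E" "1 \<le> r (fst p)"
      "\<not> Pi_node R n E r S h (fst (fst p)) t \<subseteq> Pi_node R n E r S h (snd p) t"
      using V(3) by (auto simp: BP_def)
    then show "measure_pmf.prob ?M (Ev p) \<le> 1 / ?q"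
      unfolding Ev_def by (rule prob_first_vector_in[OF fE _ _ hi hl])
  qed
  also have "\<dots> = real (card BP) / ?q" by simp
  also have "\<dots> \<le> real (card (E \<times> V)) / ?q"
  proof (rule divide_right_mono)
    show "real (card BP) \<le> real (card (E \<times> V))"
      using card_mono[OF _ fBP(2)] fE V(1) by (simp only: of_nat_le_iff finite_SigmaI)
  qed simp
  finally show ?thesis by (simp add: card_cartesian_product)
qed

lemma prob_not_good_next_slot:
  assumes V: "finite V" "E \<subseteq> V \<times> V" "\<forall>e\<in>E. 1 \<le> r e" and TS: "Suc t \<le> TS"
    and h: "h \<in> set_pmf (proto R n E r S TS stop t)"
  shows "measure_pmf.prob (map_pmf (\<lambda>x. h @ [x]) (slot_pmf R n E r S TS stop h))
      (UNIV - {h. good_event R n V E r S stop t h}) \<le> real (card E * card V) / real (card (carrier R))"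
proof -
  have fE: "finite E" using V(1,2) finite_subset by blast
  have hl: "length h = t" and hi: "consistent_hist R n E r S h" using proto_support[OF fE h] by auto
  let ?M = "slot_pmf R n E r S TS stop h"
  have "measure_pmf.prob (map_pmf (\<lambda>x. h @ [x]) ?M) (UNIV - {h. good_event R n V E r S stop t h})
      = measure_pmf.prob ?M ({x. \<not> good_event R n V E r S stop t (h @ [x])} \<inter> set_pmf ?M)"
    by (simp add: vimage_def measure_Int_set_pmf)
  also have "\<dots> \<le> measure_pmf.prob ?M {x. \<not> escapes R n V E r S h t x}"
    using escapes_good_event[OF fE V(2,3) TS hl hi]
    by (intro measure_pmf.finite_measure_mono) auto
  also have "\<dots> \<le> real (card E * card V) / real (card (carrier R))"
    by (rule prob_not_escapes[OF V hi hl])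
  finally show ?thesis .
qed

end

text \<open>Main theorem, with C = |E| |V|: average the one-slot bound over the history of the
  first t slots and pass to the complement.\<close>
theorem theorem4:
  fixes V :: "'v set" and E :: "('v \<times> 'v) set" and S :: 'v
    and r :: "'v \<times> 'v \<Rightarrow> nat" and n t :: nat
  assumes "finite V" and "E \<subseteq> V \<times> V" and "acyclic E"
    and "S \<in> V" and "\<forall>e\<in>E. snd e \<noteq> S"
    and "\<forall>e\<in>E. 1 \<le> r e" and "1 \<le> t"
  shows "\<exists>C::real. \<forall>(R::nat ring) TS (stop :: 'v \<Rightarrow> nat \<Rightarrow> 'v hist \<Rightarrow> bool).
           field R \<and> finite (carrier R) \<and> t + 1 \<le> TS \<longrightarrow>
           measure_pmf.prob (proto R n E r S TS stop (Suc t)) {h. good_event R n V E r S stop t h}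
             \<ge> 1 - C / real (card (carrier R))"
proof (intro exI[of _ "real (card E * card V)"] allI impI)
  fix R :: "nat ring" and TS and stop :: "'v \<Rightarrow> nat \<Rightarrow> 'v hist \<Rightarrow> bool"
  assume R: "field R \<and> finite (carrier R) \<and> t + 1 \<le> TS"
  interpret coord_space R n using R by (simp add: coord_space_def coord_space_axioms_def)
  let ?P = "proto R n E r S TS stop (Suc t)" and ?G = "{h. good_event R n V E r S stop t h}"
  have "measure_pmf.prob ?P (UNIV - ?G) \<le> real (card E * card V) / real (card (carrier R))"
    unfolding proto.simps using R
    by (intro bind_pmf_prob_le prob_not_good_next_slot[OF assms(1,2,6)]) simp_all
  moreover have "measure_pmf.prob ?P ?G = 1 - measure_pmf.prob ?P (UNIV - ?G)"
    using measure_pmf.prob_compl[of "UNIV - ?G" ?P] by (simp add: Diff_Diff_Int)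
  ultimately show "measure_pmf.prob ?P ?G \<ge> 1 - real (card E * card V) / real (card (carrier R))"
    by simp
qed

end
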